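(* Every finite game $\Gamma$ whose players have CPT preferences has a mixed black-box strategy Nash equilibrium; in particular it has one $\tau=(\tau_1,\dots,\tau_n)$ in which each $\tau_i$ is a finitely supported probability measure on $B_i$.
   Context: A game $\Gamma=(N,(A_i),(x_i))$: players $N=\{1,\dots,n\}$, finite action sets $A_i$, payoffs $x_i:A\to\mathbb{R}$, $A=\prod_iA_i$, $A_{-i}=\prod_{j\neq i}A_j$. Each player $i$ has CPT preferences with CPT value functional $V_i$ on finite lotteries (determined by a reference point, a continuous strictly increasing value function vanishing at the reference point, and continuous strictly increasing probability weighting functions $w_i^\pm:[0,1]\to[0,1]$ fixing $0$ and $1$, via the standard rank-dependent CPT formula). $B_i=\Delta(A_i)$ is the set of black-box strategies; for a belief $\mu_{-i}\in\Delta(A_{-i})$ and $b_i\in B_i$, $\mu(b_i,\mu_{-i})[a]=b_i[a_i]\mu_{-i}[a_{-i}]$, and $\mathcal{B}_i(\mu_{-i})=\arg\max_{b_i\in B_i}V_i(\{(\mu(b_i,\mu_{-i})[a],x_i(a))\}_{a\in A})$. For $\sigma_j\in\Delta(A_j)$, $\mu_{-i}(\sigma_{-i})[a_{-i}]=\prod_{j\ne i}\sigma_j[a_j]$. A conjecture over player $i$'s black-box strategy is a Borel probability measure $\tau_i$ on $B_i$, inducing $\sigma_i(\tau_i)[a_i]=\mathbb{E}_{\tau_i}b_i[a_i]$. A profile $\tau$ is a mixed black-box strategy Nash equilibrium if for every $i$ and every $b_i\in\operatorname{supp}\tau_i$, $b_i\in\mathcal{B}_i(\mu_{-i}((\sigma_j(\tau_j))_{j\neq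 i}))$. *)

theory Defs
  imports "HOL-Analysis.Analysis" "HOL-Probability.Probability"
begin

definition lott_prob :: "'b set \<Rightarrow> ('b \<Rightarrow> real) \<Rightarrow> ('b \<Rightarrow> bool) \<Rightarrow> real" where
  "lott_prob I p P = (\<Sum>k\<in>{k\<in>I. P k}. p k)"

text \<open>Standard rank-dependent CPT value of the finite lottery
  {(p k, z k)}_{k in I}, with reference point r, value function v and
  probability weighting functions wp (gains) and wm (losses).\<close>
definition cpt_value ::
  "real \<Rightarrow> (real \<Rightarrow> real) \<Rightarrow> (real \<Rightarrow> real) \<Rightarrow> (real \<Rightarrow> real)
    \<Rightarrow> 'b set \<Rightarrow> ('b \<Rightarrow> real) \<Rightarrow> ('b \<Rightarrow> real) \<Rightarrow> real" where
  "cpt_value r v wp wm I p z =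
     (\<Sum>y\<in>{y\<in>z ` I. y > r}.
        v y * (wp (lott_prob I p (\<lambda>k. z k \<ge> y)) - wp (lott_prob I p (\<lambda>k. z k > y))))
   + (\<Sum>y\<in>{y\<in>z ` I. y < r}.
        v y * (wm (lott_prob I p (\<lambda>k. z k \<le> y)) - wm (lott_prob I p (\<lambda>k. z k < y))))"

definition cpt_prefs :: "real \<Rightarrow> (real \<Rightarrow> real) \<Rightarrow> (real \<Rightarrow> real) \<Rightarrow> (real \<Rightarrow> real) \<Rightarrow> bool" where
  "cpt_prefs r v wp wm \<longleftrightarrow>
     continuous_on UNIV v \<and> strict_mono v \<and> v r = 0 \<and>
     continuous_on {0..1} wp \<and> strict_mono_on {0..1} wp \<and> wp 0 = 0 \<and> wp 1 = 1 \<and>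
     continuous_on {0..1} wm \<and> strict_mono_on {0..1} wm \<and> wm 0 = 0 \<and> wm 1 = 1"

definition bb_simplex :: "'a set \<Rightarrow> ('a \<Rightarrow> real) set" where
  "bb_simplex S = {b. (\<forall>a. 0 \<le> b a) \<and> (\<forall>a. a \<notin> S \<longrightarrow> b a = 0) \<and> sum b S = 1}"

definition joint_prob :: "'n::finite \<Rightarrow> ('a \<Rightarrow> real) \<Rightarrow> ('n \<Rightarrow> 'a \<Rightarrow> real) \<Rightarrow> ('n \<Rightarrow> 'a) \<Rightarrow> real" where
  "joint_prob i b \<sigma> a = b (a i) * (\<Prod>j\<in>UNIV - {i}. \<sigma> j (a j))"

definition bb_value ::
  "('n::finite \<Rightarrow> 'a set) \<Rightarrow> ('n \<Rightarrow> ('n \<Rightarrow> 'a) \<Rightarrow> real) \<Rightarrow> ('n \<Rightarrow> real) \<Rightarrow> ('n \<Rightarrow> real \<Rightarrow> real)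
    \<Rightarrow> ('n \<Rightarrow> real \<Rightarrow> real) \<Rightarrow> ('n \<Rightarrow> real \<Rightarrow> real) \<Rightarrow> 'n \<Rightarrow> ('n \<Rightarrow> 'a \<Rightarrow> real) \<Rightarrow> ('a \<Rightarrow> real) \<Rightarrow> real" where
  "bb_value A x r v wp wm i \<sigma> b =
     cpt_value (r i) (v i) (wp i) (wm i) (PiE UNIV A) (joint_prob i b \<sigma>) (x i)"

definition bb_best_response ::
  "('n::finite \<Rightarrow> 'a set) \<Rightarrow> ('n \<Rightarrow> ('n \<Rightarrow> 'a) \<Rightarrow> real) \<Rightarrow> ('n \<Rightarrow> real) \<Rightarrow> ('n \<Rightarrow> real \<Rightarrow> real)
    \<Rightarrow> ('n \<Rightarrow> real \<Rightarrow> real) \<Rightarrow> ('n \<Rightarrow> real \<Rightarrow> real) \<Rightarrow> 'n \<Rightarrow> ('n \<Rightarrow> 'a \<Rightarrow> real) \<Rightarrow> ('a \<Rightarrow> real) \<Rightarrow> bool" where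
  "bb_best_response A x r v wp wm i \<sigma> b \<longleftrightarrow>
     b \<in> bb_simplex (A i) \<and>
     (\<forall>b'\<in>bb_simplex (A i). bb_value A x r v wp wm i \<sigma> b' \<le> bb_value A x r v wp wm i \<sigma> b)"

definition induced_mixed :: "('a \<Rightarrow> real) pmf \<Rightarrow> 'a \<Rightarrow> real" where
  "induced_mixed \<tau> a = measure_pmf.expectation \<tau> (\<lambda>b. b a)"

definition mixed_bb_nash ::
  "('n::finite \<Rightarrow> 'a set) \<Rightarrow> ('n \<Rightarrow> ('n \<Rightarrow> 'a) \<Rightarrow> real) \<Rightarrow> ('n \<Rightarrow> real) \<Rightarrow> ('n \<Rightarrow> real \<Rightarrow> real)
    \<Rightarrow> ('n \<Rightarrow> real \<Rightarrow> real) \<Rightarrow> ('n \<Rightarrow> real \<Rightarrow> real) \<Rightarrow> ('n \<Rightarrow> ('a \<Rightarrow> real) pmf) \<Rightarrow> bool" where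
  "mixed_bb_nash A x r v wp wm \<tau> \<longleftrightarrow>
     (\<forall>i. set_pmf (\<tau> i) \<subseteq> bb_simplex (A i)) \<and>
     (\<forall>i. \<forall>b\<in>set_pmf (\<tau> i).
        bb_best_response A x r v wp wm i (\<lambda>j. induced_mixed (\<tau> j)) b)"

end

theory Submission
  imports Defs "HOL-Library.Function_Algebras"
begin

text \<open>Look for an equilibrium in which every player mixes at most \<open>K = \<Sum>\<^sub>i |A\<^sub>i| + 1\<close>
  black-box strategies; such profiles, given by \<open>K\<close> points of each \<open>\<Delta>(A\<^sub>i)\<close> and weights on them,
  form a compact space. Since a black-box strategy is evaluated against the opponents' mixtures
  only, any finitely many test strategies define a finite game with continuous payoffs, and Nash's
  fixed-point argument (with Brouwer's theorem for cubes, obtained from Kuhn's lemma) gives a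
  profile whose support is at least as good as every test; Caratheodory's theorem compresses each
  player's mixture into \<open>K\<close> slots. Each test is a closed condition on the compact space, so one
  profile passes all tests, and its weights define finitely supported conjectures.\<close>

lemma closed_fun_box:
  assumes "\<And>j. closed (R j)"
  shows "closed {z :: 'c \<Rightarrow> 'b::topological_space. \<forall>j. z j \<in> R j}"
proof -
  have "{z :: 'c \<Rightarrow> 'b. \<forall>j. z j \<in> R j} = (\<Inter>j. (\<lambda>z. z j) -` R j)" by auto
  also have "closed \<dots>"
    by (intro closed_INT ballI closed_vimage assms continuous_on_product_coordinates)
  finally show ?thesis .
qed

lemma compact_fun_box:
  assumes "\<And>j. compact (R j)"
  shows "compact {z :: 'c \<Rightarrow> 'b::topological_space. \<forall>j. z j \<in> R j}"
proof -
  have "{z :: 'c \<Rightarrow> 'b. \<forall>j. z j \<in> R j} = PiE UNIV R"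
    by (auto simp: PiE_def Pi_def extensional_def)
  moreover have "compactin (product_topology (\<lambda>i. euclidean) UNIV) (PiE UNIV R)"
    using assms by (auto simp: compactin_PiE)
  ultimately show ?thesis by (simp add: euclidean_product_topology)
qed

lemma compact_nested_closed_common_point:
  fixes D :: "real \<Rightarrow> 'b::topological_space set"
  assumes K: "compact K" and closed: "\<And>d. d > 0 \<Longrightarrow> closed (D d)"
    and sub: "\<And>d. d > 0 \<Longrightarrow> D d \<subseteq> K" and nonempty: "\<And>d. d > 0 \<Longrightarrow> D d \<noteq> {}"
    and mono: "\<And>d d'. 0 < d \<Longrightarrow> d \<le> d' \<Longrightarrow> D d \<subseteq> D d'"
  obtains z where "\<And>d. d > 0 \<Longrightarrow> z \<in> D d"
proof -
  have "K \<inter> \<Inter>(D ` {0<..}) \<noteq> {}"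
  proof (rule compact_imp_fip[OF K])
    show "\<And>T. T \<in> D ` {0<..} \<Longrightarrow> closed T" using closed by auto
    fix F assume "finite F" "F \<subseteq> D ` {0<..}"
    then obtain G where G: "G \<subseteq> {0<..}" "finite G" "F = D ` G"
      by (meson finite_subset_image)
    show "K \<inter> \<Inter> F \<noteq> {}"
    proof (cases "G = {}")
      case True
      then show ?thesis using G sub[of 1] nonempty[of 1] by auto
    next
      case False
      then have "Min G \<in> G" "\<And>g. g \<in> G \<Longrightarrow> Min G \<le> g" using G by auto
      then have "D (Min G) \<subseteq> K \<inter> \<Inter> F" "Min G > 0" using G sub mono by blast+
      then show ?thesis using nonempty by blast
    qed
  qed
  then show ?thesis using that by auto
qed

definition unit_cube :: "'c set \<Rightarrow> ('c \<Rightarrow> real) set" where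
  "unit_cube I = {z. \<forall>j. z j \<in> (if j \<in> I then {0..1} else {0})}"

lemma mem_unit_cube:
  "z \<in> unit_cube I \<longleftrightarrow> (\<forall>j\<in>I. 0 \<le> z j \<and> z j \<le> 1) \<and> (\<forall>j. j \<notin> I \<longrightarrow> z j = 0)"
  unfolding unit_cube_def by (auto split: if_splits)

lemma compact_unit_cube: "compact (unit_cube I)"
  unfolding unit_cube_def by (rule compact_fun_box) auto

lemma closed_unit_cube: "closed (unit_cube I)"
  unfolding unit_cube_def by (rule closed_fun_box) auto

text \<open>The function space is not metrizable when \<open>'c\<close> is uncountable, so uniform continuity on the
  cube is derived from compactness directly: the pairs violating it for \<open>d\<close> form a nested family of
  compact sets, and a common point \<open>(y, z)\<close> would satisfy \<open>y = z\<close> but \<open>f y \<noteq> f z\<close>.\<close>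

lemma unit_cube_uniformly_continuous:
  fixes f :: "('c \<Rightarrow> real) \<Rightarrow> ('c \<Rightarrow> real)"
  assumes I: "finite I" and cont: "continuous_on (unit_cube I) f" and e: "e > 0"
  obtains d where "d > 0"
    and "\<And>y z j. y \<in> unit_cube I \<Longrightarrow> z \<in> unit_cube I \<Longrightarrow> \<forall>k\<in>I. \<bar>y k - z k\<bar> < d \<Longrightarrow> j \<in> I
           \<Longrightarrow> \<bar>f y j - f z j\<bar> < e"
proof -
  have "\<exists>d>0. \<forall>y\<in>unit_cube I. \<forall>z\<in>unit_cube I. (\<forall>k\<in>I. \<bar>y k - z k\<bar> < d) \<longrightarrow>
          (\<forall>j\<in>I. \<bar>f y j - f z j\<bar> < e)"
  proof (rule ccontr)
  assume "\<not> ?thesis"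
  then have bad: "\<exists>y\<in>unit_cube I. \<exists>z\<in>unit_cube I. (\<forall>k\<in>I. \<bar>y k - z k\<bar> < d) \<and>
                    (\<exists>j\<in>I. e \<le> \<bar>f y j - f z j\<bar>)" if "d > 0" for d
    using that by (meson not_le)
  define C where "C = unit_cube I \<times> unit_cube I"
  define D where "D d = C \<inter> (\<Inter>k\<in>I. {p. \<bar>fst p k - snd p k\<bar> \<le> d})
      \<inter> (\<Union>j\<in>I. C \<inter> (\<lambda>p. \<bar>f (fst p) j - f (snd p) j\<bar>) -` {e..})" for d
  have closed_C: "closed C" unfolding C_def by (intro closed_Times closed_unit_cube)
  have cont_j: "continuous_on (unit_cube I) (\<lambda>z. f z j)" for j
    using cont by (rule continuous_on_product_then_coordinatewise)
  have cont_diff: "continuous_on C (\<lambda>p. \<bar>f (fst p) j - f (snd p) j\<bar>)" for j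
    unfolding C_def
    by (intro continuous_intros continuous_on_compose2[OF cont_j]) auto
  have cont_dist: "continuous_on UNIV (\<lambda>p :: ('c \<Rightarrow> real) \<times> ('c \<Rightarrow> real). \<bar>fst p k - snd p k\<bar>)"
    for k
    by (intro continuous_intros continuous_on_compose2[OF continuous_on_product_coordinates]) auto
  obtain p where p: "\<And>d. d > 0 \<Longrightarrow> p \<in> D d"
  proof (rule compact_nested_closed_common_point)
    show "compact C" unfolding C_def by (intro compact_Times compact_unit_cube)
    fix d :: real assume d: "d > 0"
    have "closed {p. \<bar>fst p k - snd p k\<bar> \<le> d}" for k :: 'c
      using closed_vimage[OF closed_atMost cont_dist[of k], of d] by (simp add: vimage_def)
    moreover have "closed (\<Union>j\<in>I. C \<inter> (\<lambda>p. \<bar>f (fst p) j - f (snd p) j\<bar>) -` {e..})"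
      by (intro closed_UN[OF I] ballI continuous_closed_preimage[OF cont_diff closed_C closed_atLeast])
    ultimately show "closed (D d)" unfolding D_def by (intro closed_Int closed_C closed_INT ballI)
    show "D d \<subseteq> C" unfolding D_def by auto
    from bad[OF d] obtain y z where "y \<in> unit_cube I" "z \<in> unit_cube I"
      "\<forall>k\<in>I. \<bar>y k - z k\<bar> < d" "\<exists>j\<in>I. e \<le> \<bar>f y j - f z j\<bar>"
      by blast
    then have "(y, z) \<in> D d" unfolding D_def C_def by (auto simp: less_imp_le)
    then show "D d \<noteq> {}" by blast
  next
    fix d d' :: real assume "0 < d" "d \<le> d'"
    then show "D d \<subseteq> D d'" unfolding D_def by (auto intro: order_trans)
  qed (use that in blast)
  obtain y z where yz: "p = (y, z)" by fastforce
  have "y k = z k" for k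
  proof (cases "k \<in> I")
    case True
    have "\<bar>y k - z k\<bar> \<le> 0"
    proof (rule field_le_epsilon)
      fix d :: real assume "0 < d"
      then show "\<bar>y k - z k\<bar> \<le> 0 + d" using p True yz by (auto simp: D_def)
    qed
    then show ?thesis by simp
  next
    case False
    then show ?thesis using p[of 1] yz by (auto simp: D_def C_def mem_unit_cube)
  qed
  then have "y = z" by blast
  with p[of 1] yz e show False by (auto simp: D_def)
  qed
  then show ?thesis using that by blast
qed

text \<open>Kuhn's lemma on the grid of mesh \<open>1/p\<close>; the label of coordinate \<open>j\<close> records whether \<open>f\<close>
  increases it, and the exception at \<open>1\<close> makes the boundary conditions hold.\<close>

lemma unit_cube_kuhn_cell:
  fixes f :: "('c \<Rightarrow> real) \<Rightarrow> ('c \<Rightarrow> real)" and p :: nat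
  assumes I: "finite I" and maps: "\<And>z. z \<in> unit_cube I \<Longrightarrow> f z \<in> unit_cube I" and p: "0 < p"
  obtains z where "z \<in> unit_cube I"
    and "\<And>j. j \<in> I \<Longrightarrow> \<exists>y\<in>unit_cube I. \<exists>y'\<in>unit_cube I.
           (\<forall>k\<in>I. z k \<le> y k \<and> y k \<le> z k + 1 / p \<and> z k \<le> y' k \<and> y' k \<le> z k + 1 / p) \<and>
           y j \<le> f y j \<and> f y' j \<le> y' j"
proof -
  obtain b where b: "bij_betw b {..<card I} I"
    using ex_bij_betw_nat_finite[OF I] by (auto simp: atLeast0LessThan)
  define c where "c = inv_into {..<card I} b"
  have b_in: "i < card I \<Longrightarrow> b i \<in> I" for i using b by (auto simp: bij_betw_def)
  have c_lt: "j \<in> I \<Longrightarrow> c j < card I" for j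
    using b unfolding c_def bij_betw_def by (metis inv_into_into lessThan_iff)
  have b_c: "j \<in> I \<Longrightarrow> b (c j) = j" for j
    using b unfolding c_def bij_betw_def by (simp add: f_inv_into_f)
  have c_b: "i < card I \<Longrightarrow> c (b i) = i" for i
    using b unfolding c_def bij_betw_def by (simp add: inv_into_f_f)
  define P where "P x = (\<lambda>j. if j \<in> I then real (x (c j)) / p else 0)" for x :: "nat \<Rightarrow> nat"
  have P_b: "i < card I \<Longrightarrow> P x (b i) = real (x i) / p" for x i by (simp add: P_def b_in c_b)
  have P_cube: "(\<forall>i<card I. x i \<le> p) \<Longrightarrow> P x \<in> unit_cube I" for x
    using p c_lt by (auto simp: mem_unit_cube P_def field_simps)
  define label where
    "label x i = (if P x (b i) \<le> f (P x) (b i) \<and> P x (b i) \<noteq> 1 then 0 else 1::nat)" for x i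
  obtain q where q: "\<forall>i<card I. q i < p"
    and cell: "\<forall>i<card I. \<exists>r s. (\<forall>j<card I. q j \<le> r j \<and> r j \<le> q j + 1) \<and>
                                (\<forall>j<card I. q j \<le> s j \<and> s j \<le> q j + 1) \<and> label r i \<noteq> label s i"
  proof (rule kuhn_lemma[OF p])
    show "\<forall>x. (\<forall>i<card I. x i \<le> p) \<longrightarrow> (\<forall>i<card I. x i = 0 \<longrightarrow> label x i = 0)"
    proof (intro allI impI)
      fix x i assume x: "\<forall>i<card I. x i \<le> p" and "i < card I" "x i = 0"
      moreover have "f (P x) \<in> unit_cube I" using maps P_cube x by auto
      ultimately show "label x i = 0" using b_in P_b by (auto simp: label_def mem_unit_cube)
    qed
  qed (use p P_b in \<open>auto simp: label_def\<close>)
  define z where "z = P q"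
  have near: "P t \<in> unit_cube I \<and> (\<forall>k\<in>I. z k \<le> P t k \<and> P t k \<le> z k + 1 / p)"
    if t: "\<forall>j<card I. q j \<le> t j \<and> t j \<le> q j + 1" for t
  proof -
    have "\<forall>i<card I. t i \<le> p" using t q by (metis Suc_eq_plus1 Suc_leI order_trans)
    moreover have "z k \<le> P t k \<and> P t k \<le> z k + 1 / p" if "k \<in> I" for k
      using t c_lt[OF that] p that
      by (auto simp: z_def P_def divide_right_mono add_divide_distrib[symmetric])
    ultimately show ?thesis using P_cube by blast
  qed
  show ?thesis
  proof
    show "z \<in> unit_cube I" unfolding z_def using q by (intro P_cube) (auto simp: less_imp_le)
    fix j assume j: "j \<in> I"
    obtain t t' where t: "\<forall>j<card I. q j \<le> t j \<and> t j \<le> q j + 1"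
      and t': "\<forall>j<card I. q j \<le> t' j \<and> t' j \<le> q j + 1"
      and labels: "label t (c j) = 0" "label t' (c j) \<noteq> 0"
    proof -
      obtain r s where "\<forall>j<card I. q j \<le> r j \<and> r j \<le> q j + 1"
        "\<forall>j<card I. q j \<le> s j \<and> s j \<le> q j + 1" "label r (c j) \<noteq> label s (c j)"
        using cell c_lt[OF j] by blast
      moreover have "label x i = 0 \<or> label x i = 1" for x i by (simp add: label_def)
      ultimately show ?thesis using that[of r s] that[of s r] by metis
    qed
    have "P t j \<le> f (P t) j"
      using labels(1) b_c[OF j] by (auto simp: label_def split: if_splits)
    moreover have "f (P t') j \<le> P t' j"
    proof -
      have "f (P t') j \<le> 1" using maps near[OF t'] j by (auto simp: mem_unit_cube)
      then show ?thesis using labels(2) b_c[OF j] by (auto simp: label_def split: if_splits)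
    qed
    ultimately show "\<exists>y\<in>unit_cube I. \<exists>y'\<in>unit_cube I.
           (\<forall>k\<in>I. z k \<le> y k \<and> y k \<le> z k + 1 / p \<and> z k \<le> y' k \<and> y' k \<le> z k + 1 / p) \<and>
           y j \<le> f y j \<and> f y' j \<le> y' j"
      using near[OF t] near[OF t'] by blast
  qed
qed

lemma unit_cube_approx_fixpoint:
  fixes f :: "('c \<Rightarrow> real) \<Rightarrow> ('c \<Rightarrow> real)"
  assumes I: "finite I" and cont: "continuous_on (unit_cube I) f"
    and maps: "\<And>z. z \<in> unit_cube I \<Longrightarrow> f z \<in> unit_cube I" and \<eta>: "\<eta> > 0"
  shows "\<exists>z\<in>unit_cube I. \<forall>j\<in>I. \<bar>f z j - z j\<bar> \<le> \<eta>"
proof -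
  obtain d where d: "d > 0" and unif: "\<And>y z j. y \<in> unit_cube I \<Longrightarrow> z \<in> unit_cube I \<Longrightarrow>
      \<forall>k\<in>I. \<bar>y k - z k\<bar> < d \<Longrightarrow> j \<in> I \<Longrightarrow> \<bar>f y j - f z j\<bar> < \<eta> / 2"
    using unit_cube_uniformly_continuous[OF I cont, of "\<eta> / 2"] \<eta> by auto
  define m where "m = min d (\<eta> / 2)"
  have m: "0 < m" "m \<le> d" "m \<le> \<eta> / 2" using d \<eta> by (auto simp: m_def)
  obtain p :: nat where p_gt: "1 / m < p" using reals_Archimedean2 by blast
  have p_pos: "0 < real p" using p_gt m(1) by (smt (verit) zero_less_divide_1_iff)
  have "1 / real p < m" using p_gt m(1) p_pos by (simp add: field_simps)
  then have p: "0 < p" "1 / p < d" "1 / p \<le> \<eta> / 2" using p_pos m by auto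
  obtain z where z: "z \<in> unit_cube I"
    and cell: "\<And>j. j \<in> I \<Longrightarrow> \<exists>y\<in>unit_cube I. \<exists>y'\<in>unit_cube I.
           (\<forall>k\<in>I. z k \<le> y k \<and> y k \<le> z k + 1 / p \<and> z k \<le> y' k \<and> y' k \<le> z k + 1 / p) \<and>
           y j \<le> f y j \<and> f y' j \<le> y' j"
    using unit_cube_kuhn_cell[where f = f, OF I maps p(1)] by blast
  have "\<bar>f z j - z j\<bar> \<le> \<eta>" if j: "j \<in> I" for j
  proof -
    obtain y y' where y: "y \<in> unit_cube I" "y' \<in> unit_cube I"
      and close: "\<forall>k\<in>I. z k \<le> y k \<and> y k \<le> z k + 1 / p \<and> z k \<le> y' k \<and> y' k \<le> z k + 1 / p"
      and up: "y j \<le> f y j" and down: "f y' j \<le> y' j"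
      using cell[OF j] by blast
    have "\<forall>k\<in>I. \<bar>y k - z k\<bar> < d" "\<forall>k\<in>I. \<bar>y' k - z k\<bar> < d"
      using close p(2) by force+
    then have "\<bar>f y j - f z j\<bar> < \<eta> / 2" "\<bar>f y' j - f z j\<bar> < \<eta> / 2"
      using unif[OF y(1) z _ j] unif[OF y(2) z _ j] by blast+
    moreover have "z j \<le> y j" "y' j \<le> z j + 1 / p" using close j by auto
    ultimately show ?thesis using up down p(3) unfolding abs_le_iff abs_less_iff by linarith
  qed
  then show ?thesis using z by blast
qed

lemma unit_cube_fixpoint:
  fixes f :: "('c \<Rightarrow> real) \<Rightarrow> ('c \<Rightarrow> real)"
  assumes I: "finite I" and cont: "continuous_on (unit_cube I) f"
    and maps: "\<And>z. z \<in> unit_cube I \<Longrightarrow> f z \<in> unit_cube I"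
  shows "\<exists>z\<in>unit_cube I. f z = z"
proof -
  define D where "D \<eta> = unit_cube I \<inter> (\<Inter>j\<in>I. unit_cube I \<inter> (\<lambda>z. \<bar>f z j - z j\<bar>) -` {..\<eta>})"
    for \<eta> :: real
  have cont_j: "continuous_on (unit_cube I) (\<lambda>z. \<bar>f z j - z j\<bar>)" for j
    by (intro continuous_intros continuous_on_product_then_coordinatewise[OF cont]
        continuous_on_compose2[OF continuous_on_product_coordinates]) auto
  obtain z where z: "\<And>\<eta>. \<eta> > 0 \<Longrightarrow> z \<in> D \<eta>"
  proof (rule compact_nested_closed_common_point[OF compact_unit_cube])
    fix \<eta> :: real assume "\<eta> > 0"
    show "closed (D \<eta>)" unfolding D_def
      by (intro closed_Int closed_unit_cube closed_INT ballI
          continuous_closed_preimage[OF cont_j closed_unit_cube closed_atMost])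
    show "D \<eta> \<subseteq> unit_cube I" unfolding D_def by auto
    show "D \<eta> \<noteq> {}"
      using unit_cube_approx_fixpoint[OF I cont maps \<open>\<eta> > 0\<close>] unfolding D_def by auto
  next
    fix d d' :: real assume "0 < d" "d \<le> d'"
    then show "D d \<subseteq> D d'" unfolding D_def by auto
  qed (use that in blast)
  have z_cube: "z \<in> unit_cube I" using z[of 1] by (auto simp: D_def)
  have "f z j = z j" for j
  proof (cases "j \<in> I")
    case True
    have "\<bar>f z j - z j\<bar> \<le> 0"
    proof (rule field_le_epsilon)
      fix \<eta> :: real assume "0 < \<eta>"
      then show "\<bar>f z j - z j\<bar> \<le> 0 + \<eta>" using z[OF \<open>0 < \<eta>\<close>] True by (auto simp: D_def split: if_split_asm)
    qed
    then show ?thesis by simp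
  next
    case False
    then show ?thesis using z_cube maps[OF z_cube] by (auto simp: mem_unit_cube)
  qed
  then show ?thesis using z_cube by blast
qed

lemma bb_simplex_le_one:
  assumes "b \<in> bb_simplex S" "finite S"
  shows "b a \<le> 1"
proof (cases "a \<in> S")
  case True
  then have "b a \<le> sum b S" by (intro member_le_sum) (use assms in \<open>auto simp: bb_simplex_def\<close>)
  then show ?thesis using assms by (simp add: bb_simplex_def)
qed (use assms in \<open>auto simp: bb_simplex_def\<close>)

lemma continuous_on_component2:
  "continuous_on S (\<lambda>x :: 'a \<Rightarrow> 'b \<Rightarrow> 'c::topological_space. x i j)"
  by (rule continuous_on_product_then_coordinatewise[OF
        continuous_on_product_then_coordinatewise[OF continuous_on_id]])

definition simplex_profiles :: "('n \<Rightarrow> 'g set) \<Rightarrow> ('n \<Rightarrow> 'g \<Rightarrow> real) set" where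
  "simplex_profiles T = {l. \<forall>i. l i \<in> bb_simplex (T i)}"

text \<open>Rescale each block of coordinates to total mass one, after topping it up uniformly when its
  mass is below one.\<close>

lemma simplex_profiles_retract_of_unit_cube:
  fixes T :: "'n \<Rightarrow> 'g set"
  assumes fin: "\<And>i. finite (T i)" and nonempty: "\<And>i. T i \<noteq> {}"
  obtains \<rho> :: "('n \<times> 'g \<Rightarrow> real) \<Rightarrow> 'n \<Rightarrow> 'g \<Rightarrow> real"
  where "continuous_on UNIV \<rho>" and "\<rho> \<in> unit_cube (Sigma UNIV T) \<rightarrow> simplex_profiles T"
    and "\<And>l. l \<in> simplex_profiles T \<Longrightarrow> \<rho> (\<lambda>(i, g). l i g) = l"
proof
  define mass where "mass z i = (\<Sum>h\<in>T i. z (i, h))" for z :: "'n \<times> 'g \<Rightarrow> real" and i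
  define \<rho> where "\<rho> z = (\<lambda>i g. if g \<in> T i
      then (z (i, g) + max 0 (1 - mass z i) / card (T i)) / max 1 (mass z i) else 0)" for z
  have card_pos: "card (T i) \<noteq> 0" for i using fin nonempty by simp
  have max_one: "max 1 x \<noteq> (0::real)" for x by (simp add: max_def)
  show "continuous_on UNIV \<rho>"
  proof (intro continuous_on_coordinatewise_then_product)
    fix i g
    show "continuous_on UNIV (\<lambda>z. \<rho> z i g)"
      unfolding \<rho>_def mass_def
      by (cases "g \<in> T i") (auto intro!: continuous_intros simp: card_pos max_one)
  qed
  show "\<rho> \<in> unit_cube (Sigma UNIV T) \<rightarrow> simplex_profiles T"
  proof
    fix z assume z: "z \<in> unit_cube (Sigma UNIV T)"
    have "\<rho> z i \<in> bb_simplex (T i)" for i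
    proof -
      have "sum (\<rho> z i) (T i) = (\<Sum>g\<in>T i. (z (i, g) + max 0 (1 - mass z i) / card (T i)) / max 1 (mass z i))"
        by (rule sum.cong) (auto simp: \<rho>_def)
      also have "\<dots> = (mass z i + max 0 (1 - mass z i)) / max 1 (mass z i)"
        using card_pos[of i] by (simp add: sum_divide_distrib[symmetric] sum.distrib mass_def)
      also have "\<dots> = 1" by (auto simp: max_def)
      finally show ?thesis using z by (auto simp: bb_simplex_def \<rho>_def mem_unit_cube)
    qed
    then show "\<rho> z \<in> simplex_profiles T" by (simp add: simplex_profiles_def)
  qed
  fix l assume "l \<in> simplex_profiles T"
  then have "mass (\<lambda>(i, g). l i g) i = 1" "g \<notin> T i \<Longrightarrow> l i g = 0" for i g
    by (auto simp: simplex_profiles_def bb_simplex_def mass_def)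
  then show "\<rho> (\<lambda>(i, g). l i g) = l" by (intro ext) (auto simp: \<rho>_def)
qed

lemma simplex_profiles_fixpoint:
  fixes T :: "'n::finite \<Rightarrow> 'g set"
    and f :: "('n \<Rightarrow> 'g \<Rightarrow> real) \<Rightarrow> 'n \<Rightarrow> 'g \<Rightarrow> real"
  assumes fin: "\<And>i. finite (T i)" and nonempty: "\<And>i. T i \<noteq> {}"
    and cont: "continuous_on (simplex_profiles T) f" and maps: "f \<in> simplex_profiles T \<rightarrow> simplex_profiles T"
  obtains l where "l \<in> simplex_profiles T" and "f l = l"
proof -
  obtain \<rho> where \<rho>: "continuous_on UNIV \<rho>" "\<rho> \<in> unit_cube (Sigma UNIV T) \<rightarrow> simplex_profiles T"
    and retract: "\<And>l. l \<in> simplex_profiles T \<Longrightarrow> \<rho> (\<lambda>(i, g). l i g) = l"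
    using simplex_profiles_retract_of_unit_cube[where T = T, OF fin nonempty] by blast
  show ?thesis
  proof (rule invertible_fixpoint_property[where S = "unit_cube (Sigma UNIV T)"
        and i = "\<lambda>l. \<lambda>(i, g). l i g" and r = \<rho>])
    show "continuous_on (simplex_profiles T) (\<lambda>l. \<lambda>(i, g). l i g)"
      by (intro continuous_on_coordinatewise_then_product) (auto intro: continuous_on_component2)
    show "(\<lambda>l. \<lambda>(i, g). l i g) \<in> simplex_profiles T \<rightarrow> unit_cube (Sigma UNIV T)"
    proof
      fix l assume "l \<in> simplex_profiles T"
      then have l: "l i \<in> bb_simplex (T i)" for i by (simp add: simplex_profiles_def)
      then have "l i g \<le> 1" "0 \<le> l i g" "g \<notin> T i \<Longrightarrow> l i g = 0" for i g
        using bb_simplex_le_one[OF l fin] by (auto simp: bb_simplex_def)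
      then show "(\<lambda>(i, g). l i g) \<in> unit_cube (Sigma UNIV T)" by (auto simp: mem_unit_cube)
    qed
    show "continuous_on (unit_cube (Sigma UNIV T)) \<rho>" using \<rho>(1) by (rule continuous_on_subset) simp
    show "\<exists>z\<in>unit_cube (Sigma UNIV T). g z = z"
      if "continuous_on (unit_cube (Sigma UNIV T)) g"
        and "g \<in> unit_cube (Sigma UNIV T) \<rightarrow> unit_cube (Sigma UNIV T)" for g
      using that fin by (intro unit_cube_fixpoint) auto
    show "\<rho> \<in> unit_cube (Sigma UNIV T) \<rightarrow> simplex_profiles T" by (rule \<rho>(2))
    show "\<rho> ((\<lambda>l. \<lambda>(i, g). l i g) l) = l" if "l \<in> simplex_profiles T" for l
      using retract[OF that] by simp
    show "continuous_on (simplex_profiles T) f" by (rule cont)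
    show "f \<in> simplex_profiles T \<rightarrow> simplex_profiles T" by (rule maps)
  qed (rule that)
qed

text \<open>The map of Nash's 1951 existence proof, for one player.\<close>

definition nash_gain :: "'g set \<Rightarrow> ('g \<Rightarrow> real) \<Rightarrow> ('g \<Rightarrow> real) \<Rightarrow> 'g \<Rightarrow> real" where
  "nash_gain T l u g = max 0 (u g - (\<Sum>h\<in>T. l h * u h))"

definition nash_map :: "'g set \<Rightarrow> ('g \<Rightarrow> real) \<Rightarrow> ('g \<Rightarrow> real) \<Rightarrow> 'g \<Rightarrow> real" where
  "nash_map T l u g =
     (if g \<in> T then (l g + nash_gain T l u g) / (1 + (\<Sum>h\<in>T. nash_gain T l u h)) else 0)"

lemma nash_map_in_bb_simplex:
  assumes "finite T" "l \<in> bb_simplex T"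
  shows "nash_map T l u \<in> bb_simplex T"
proof -
  define S where "S = (\<Sum>h\<in>T. nash_gain T l u h)"
  have S: "0 \<le> S" unfolding S_def by (intro sum_nonneg) (simp add: nash_gain_def)
  have "sum (nash_map T l u) T = (\<Sum>g\<in>T. (l g + nash_gain T l u g) / (1 + S))"
    by (rule sum.cong) (auto simp: nash_map_def S_def)
  also have "\<dots> = (sum l T + S) / (1 + S)"
    by (simp add: sum_divide_distrib[symmetric] sum.distrib S_def)
  also have "\<dots> = 1" using assms S by (simp add: bb_simplex_def)
  moreover have "0 \<le> nash_map T l u g" for g
    unfolding nash_map_def S_def[symmetric]
    using assms S by (auto simp: bb_simplex_def nash_gain_def)
  ultimately show ?thesis by (simp add: bb_simplex_def nash_map_def)
qed

lemma nash_map_fixpoint_best_reply: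
  assumes T: "finite T" and l: "l \<in> bb_simplex T" and fixed: "nash_map T l u = l"
    and g: "g \<in> T" "l g > 0" and h: "h \<in> T"
  shows "u h \<le> u g"
proof -
  define avg where "avg = (\<Sum>h\<in>T. l h * u h)"
  define S where "S = (\<Sum>h\<in>T. nash_gain T l u h)"
  have l0: "\<And>g. 0 \<le> l g" and l1: "sum l T = 1" using l by (auto simp: bb_simplex_def)
  have S0: "S \<ge> 0" unfolding S_def by (intro sum_nonneg) (simp add: nash_gain_def)
  have gain: "l g * S = nash_gain T l u g" if "g \<in> T" for g
  proof -
    have "l g = (l g + nash_gain T l u g) / (1 + S)"
      using fun_cong[OF fixed, of g] that by (simp add: nash_map_def S_def)
    then show ?thesis using S0 by (simp add: field_simps)
  qed
  have centred: "(\<Sum>g\<in>T. l g * (u g - avg)) = 0"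
    using l1 by (simp add: algebra_simps sum_subtractf sum_distrib_right[symmetric] avg_def)
  txt \<open>Some strategy in the support does no better than average, so its gain vanishes and hence
    so does the total gain \<open>S\<close>.\<close>
  obtain g0 where g0: "g0 \<in> T" "l g0 > 0" "u g0 \<le> avg"
  proof (rule ccontr)
    assume "\<not> thesis"
    then have above: "\<And>g. g \<in> T \<Longrightarrow> l g > 0 \<Longrightarrow> u g > avg" using that by fastforce
    have "0 < l g * (u g - avg)" using above[OF g] g by simp
    also have "\<dots> \<le> (\<Sum>g\<in>T. l g * (u g - avg))"
    proof (intro member_le_sum T g)
      fix g' assume "g' \<in> T - {g}"
      then show "0 \<le> l g' * (u g' - avg)"
        using above[of g'] l0[of g'] by (cases "l g' = 0") auto
    qed
    finally show False using centred by simp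
  qed
  have "l g0 * S = 0" using gain[OF g0(1)] g0(3) by (simp add: nash_gain_def avg_def)
  then have "S = 0" using g0 by simp
  then have "nash_gain T l u h' = 0" if "h' \<in> T" for h'
    using T that unfolding S_def by (subst (asm) sum_nonneg_eq_0_iff) (auto simp: nash_gain_def)
  then have below: "u h' \<le> avg" if "h' \<in> T" for h'
    using that by (fastforce simp: nash_gain_def avg_def max_def split: if_splits)
  have "(\<Sum>g\<in>T. l g * (avg - u g)) = 0"
    using centred by (simp add: algebra_simps sum_subtractf sum_negf[symmetric] right_diff_distrib)
  then have "l g * (avg - u g) = 0"
    using T l0 below g by (subst (asm) sum_nonneg_eq_0_iff) auto
  then show ?thesis using below[OF h] g by simp
qed

lemma finite_game_support_best_reply:
  fixes T :: "'n::finite \<Rightarrow> 'g set" and u :: "'n \<Rightarrow> ('n \<Rightarrow> 'g \<Rightarrow> real) \<Rightarrow> 'g \<Rightarrow> real"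
  assumes fin: "\<And>i. finite (T i)" and nonempty: "\<And>i. T i \<noteq> {}"
    and cont: "\<And>i g. g \<in> T i \<Longrightarrow> continuous_on (simplex_profiles T) (\<lambda>l. u i l g)"
  obtains l where "l \<in> simplex_profiles T"
    and "\<And>i g h. g \<in> T i \<Longrightarrow> l i g > 0 \<Longrightarrow> h \<in> T i \<Longrightarrow> u i l h \<le> u i l g"
proof -
  define f where "f l = (\<lambda>i. nash_map (T i) (l i) (u i l))" for l
  have denominator: "1 + (\<Sum>h\<in>T i. max 0 (F h)) \<noteq> (0::real)" for i and F :: "'g \<Rightarrow> real"
    using sum_nonneg[of "T i" "\<lambda>h. max 0 (F h)"] by auto
  have "continuous_on (simplex_profiles T) f"
  proof (intro continuous_on_coordinatewise_then_product)
    fix i g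
    show "continuous_on (simplex_profiles T) (\<lambda>l. f l i g)"
      unfolding f_def nash_map_def nash_gain_def
      by (cases "g \<in> T i")
        (auto intro!: continuous_intros cont continuous_on_component2 simp: denominator)
  qed
  moreover have "f \<in> simplex_profiles T \<rightarrow> simplex_profiles T"
    using fin by (auto simp: f_def simplex_profiles_def nash_map_in_bb_simplex)
  ultimately obtain l where l: "l \<in> simplex_profiles T" and fixed_f: "f l = l"
    using simplex_profiles_fixpoint[where T = T, OF fin nonempty] by blast
  have fixed: "nash_map (T i) (l i) (u i l) = l i" for i
    using fun_cong[OF fixed_f, of i] by (simp only: f_def)
  show ?thesis
  proof (rule that[OF l])
    fix i g h assume "g \<in> T i" "l i g > 0" "h \<in> T i"
    moreover have "l i \<in> bb_simplex (T i)" using l by (simp add: simplex_profiles_def)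
    ultimately show "u i l h \<le> u i l g" using nash_map_fixpoint_best_reply[OF fin _ fixed] by blast
  qed
qed

definition fun_scale :: "real \<Rightarrow> ('c \<Rightarrow> real) \<Rightarrow> 'c \<Rightarrow> real" where
  "fun_scale c f = (\<lambda>x. c * f x)"

interpretation fun_vector_space: vector_space "fun_scale :: real \<Rightarrow> ('c \<Rightarrow> real) \<Rightarrow> 'c \<Rightarrow> real"
  by unfold_locales (auto simp: fun_scale_def fun_eq_iff algebra_simps)

lemma sum_fun_apply: "sum F P x = (\<Sum>p\<in>P. F p x)" for F :: "'b \<Rightarrow> 'c \<Rightarrow> real"
  by (induction P rule: infinite_finite_induct) (auto simp: func_plus func_zero)

lemma finite_support_in_span_indicators:
  assumes S: "finite S" and f: "\<And>x. x \<notin> S \<Longrightarrow> f x = 0"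
  shows "f \<in> fun_vector_space.span ((\<lambda>x. indicator {x}) ` S)"
proof -
  have "(\<Sum>x\<in>S. f x * indicator {x} y) = f y" for y
  proof -
    have "(\<Sum>x\<in>S. f x * indicator {x} y) = (\<Sum>x\<in>S. if x = y then f x else 0)"
      by (rule sum.cong) (auto simp: indicator_def)
    also have "\<dots> = f y" using S f by (simp add: sum.delta)
    finally show ?thesis .
  qed
  then have "f = (\<Sum>x\<in>S. fun_scale (f x) (indicator {x}))"
    by (simp add: fun_eq_iff sum_fun_apply fun_scale_def)
  also have "\<dots> \<in> fun_vector_space.span ((\<lambda>x. indicator {x}) ` S)"
    by (intro fun_vector_space.span_sum fun_vector_space.span_scale fun_vector_space.span_base imageI)
  finally show ?thesis .
qed

text \<open>Points supported on \<open>A\<close> live in a space of dimension \<open>card A\<close>; adjoining a constant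
  coordinate \<open>1\<close> turns affine dependence into linear dependence in dimension \<open>card A + 1\<close>.\<close>

lemma affine_dependent_finite_support:
  fixes P :: "('a \<Rightarrow> real) set"
  assumes A: "finite A" and P: "finite P" and supp: "\<And>p. p \<in> P \<Longrightarrow> {a. p a \<noteq> 0} \<subseteq> A"
    and card: "card A + 1 < card P"
  obtains c where "\<exists>p\<in>P. c p \<noteq> 0" and "sum c P = 0" and "\<And>a. (\<Sum>p\<in>P. c p * p a) = 0"
proof -
  define S where "S = insert None (Some ` A)"
  define lift :: "('a \<Rightarrow> real) \<Rightarrow> 'a option \<Rightarrow> real" where "lift p = case_option 1 p" for p
  define E :: "('a option \<Rightarrow> real) set" where "E = (\<lambda>x. indicator {x}) ` S"
  have S: "finite S" "card S = card A + 1" using A by (simp_all add: S_def card_image)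
  have inj: "inj_on lift P"
  proof (rule inj_onI)
    fix p q assume "lift p = lift q"
    then have "lift p (Some a) = lift q (Some a)" for a by simp
    then show "p = q" by (simp add: lift_def fun_eq_iff)
  qed
  have span: "lift ` P \<subseteq> fun_vector_space.span E"
  proof
    fix q assume "q \<in> lift ` P"
    then obtain p where p: "p \<in> P" "q = lift p" by blast
    have "q y = 0" if "y \<notin> S" for y
      using that supp[OF p(1)] p(2) by (cases y) (auto simp: S_def lift_def)
    then show "q \<in> fun_vector_space.span E"
      unfolding E_def by (rule finite_support_in_span_indicators[OF S(1)])
  qed
  have "fun_vector_space.dependent (lift ` P)"
  proof (rule ccontr)
    assume "\<not> fun_vector_space.dependent (lift ` P)"
    then have "card (lift ` P) \<le> card E"
      using fun_vector_space.independent_span_bound[OF _ _ span] S(1) by (simp add: E_def)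
    also have "\<dots> \<le> card S" unfolding E_def by (rule card_image_le[OF S(1)])
    finally show False using S(2) card card_image[OF inj] by simp
  qed
  then obtain u where u: "\<exists>q\<in>lift ` P. u q \<noteq> 0" "(\<Sum>q\<in>lift ` P. fun_scale (u q) q) = 0"
    using fun_vector_space.dependent_finite[OF finite_imageI[OF P]] by blast
  define c where "c p = u (lift p)" for p
  have lin: "(\<Sum>p\<in>P. c p * lift p y) = 0" for y
    using fun_cong[OF u(2), of y] by (simp add: sum_fun_apply fun_scale_def sum.reindex[OF inj] c_def)
  show ?thesis
  proof
    show "\<exists>p\<in>P. c p \<noteq> 0" using u(1) by (auto simp: c_def)
    show "sum c P = 0" using lin[of None] by (simp add: lift_def)
    show "(\<Sum>p\<in>P. c p * p a) = 0" for a using lin[of "Some a"] by (simp add: lift_def)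
  qed
qed

text \<open>Moving along an affine dependence \<open>c\<close> until the first weight vanishes removes a point
  without changing the mixture.\<close>

lemma caratheodory_step:
  fixes P :: "('a \<Rightarrow> real) set" and w :: "('a \<Rightarrow> real) \<Rightarrow> real"
  assumes A: "finite A" and P: "finite P" and supp: "\<And>p. p \<in> P \<Longrightarrow> {a. p a \<noteq> 0} \<subseteq> A"
    and w0: "\<And>p. p \<in> P \<Longrightarrow> 0 \<le> w p" and w1: "sum w P = 1" and card: "card A + 1 < card P"
  obtains p0 w' where "p0 \<in> P" and "\<And>p. p \<in> P - {p0} \<Longrightarrow> 0 \<le> w' p" and "sum w' (P - {p0}) = 1"
    and "\<And>a. (\<Sum>p\<in>P - {p0}. w' p * p a) = (\<Sum>p\<in>P. w p * p a)"
proof -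
  obtain c where c: "\<exists>p\<in>P. c p \<noteq> 0" "sum c P = 0" "\<And>a. (\<Sum>p\<in>P. c p * p a) = 0"
    using affine_dependent_finite_support[OF A P supp card] by blast
  define Pos where "Pos = {p\<in>P. c p > 0}"
  have "Pos \<noteq> {}"
  proof
    assume "Pos = {}"
    then have "\<forall>p\<in>P. - c p \<ge> 0" by (auto simp: Pos_def not_less)
    moreover have "(\<Sum>p\<in>P. - c p) = 0" using c(2) by (simp add: sum_negf)
    ultimately have "\<forall>p\<in>P. c p = 0" using P by (subst (asm) sum_nonneg_eq_0_iff) auto
    then show False using c(1) by auto
  qed
  moreover have "finite Pos" using P by (simp add: Pos_def)
  ultimately have min: "Min ((\<lambda>p. w p / c p) ` Pos) \<in> (\<lambda>p. w p / c p) ` Pos"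
    "\<And>p. p \<in> Pos \<Longrightarrow> Min ((\<lambda>p. w p / c p) ` Pos) \<le> w p / c p"
    by auto
  define t where "t = Min ((\<lambda>p. w p / c p) ` Pos)"
  obtain p0 where p0: "p0 \<in> Pos" "t = w p0 / c p0" using min(1) by (auto simp: t_def)
  define w' where "w' p = w p - t * c p" for p
  have p0P: "p0 \<in> P" and t: "t \<ge> 0" using p0 w0 by (auto simp: Pos_def)
  have w'_nonneg: "0 \<le> w' p" if "p \<in> P" for p
  proof (cases "c p > 0")
    case True
    then have "t \<le> w p / c p" using min(2) that by (auto simp: Pos_def t_def)
    then show ?thesis using True by (simp add: w'_def field_simps)
  next
    case False
    then have "t * c p \<le> 0" using t by (simp add: mult_nonneg_nonpos)
    then show ?thesis using w0[OF that] by (simp add: w'_def)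
  qed
  have w'_p0: "w' p0 = 0" using p0 by (auto simp: w'_def Pos_def)
  show ?thesis
  proof
    show "p0 \<in> P" by (fact p0P)
    show "0 \<le> w' p" if "p \<in> P - {p0}" for p using that w'_nonneg by blast
    have "sum w' P = 1" using c(2) w1 by (simp add: w'_def sum_subtractf sum_distrib_left[symmetric])
    then show "sum w' (P - {p0}) = 1" using sum.remove[OF P p0P, of w'] w'_p0 by simp
    fix a
    have "(\<Sum>p\<in>P. w' p * p a) = (\<Sum>p\<in>P. w p * p a) - t * (\<Sum>p\<in>P. c p * p a)"
      by (simp add: w'_def sum_subtractf sum_distrib_left algebra_simps)
    then show "(\<Sum>p\<in>P - {p0}. w' p * p a) = (\<Sum>p\<in>P. w p * p a)"
      using c(3)[of a] sum.remove[OF P p0P, of "\<lambda>p. w' p * p a"] w'_p0 by simp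
  qed
qed

lemma caratheodory_finite_support:
  fixes P :: "('a \<Rightarrow> real) set" and w :: "('a \<Rightarrow> real) \<Rightarrow> real"
  assumes A: "finite A" and "finite P" and "\<And>p. p \<in> P \<Longrightarrow> {a. p a \<noteq> 0} \<subseteq> A"
    and "\<And>p. p \<in> P \<Longrightarrow> 0 \<le> w p" and "sum w P = 1"
  shows "\<exists>Q w'. Q \<subseteq> P \<and> card Q \<le> card A + 1 \<and> (\<forall>q\<in>Q. 0 \<le> w' q) \<and> sum w' Q = 1 \<and>
           (\<forall>a. (\<Sum>q\<in>Q. w' q * q a) = (\<Sum>p\<in>P. w p * p a))"
  using assms(2-)
proof (induction "card P" arbitrary: P w rule: less_induct)
  case less
  show ?case
  proof (cases "card P \<le> card A + 1")
    case True
    then show ?thesis using less.prems by blast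
  next
    case False
    then have "card A + 1 < card P" by simp
    then obtain p0 w' where p0: "p0 \<in> P" and nonneg: "\<And>p. p \<in> P - {p0} \<Longrightarrow> 0 \<le> w' p"
      and sum1: "sum w' (P - {p0}) = 1"
      and same: "\<And>a. (\<Sum>p\<in>P - {p0}. w' p * p a) = (\<Sum>p\<in>P. w p * p a)"
      using caratheodory_step[OF A less.prems(1-4)] by blast
    have smaller: "card (P - {p0}) < card P" using less.prems(1) p0 by (rule card_Diff1_less)
    have finite: "finite (P - {p0})" and supp: "\<And>p. p \<in> P - {p0} \<Longrightarrow> {a. p a \<noteq> 0} \<subseteq> A"
      using less.prems(1,2) by auto
    obtain Q w'' where Q: "Q \<subseteq> P - {p0}" "card Q \<le> card A + 1" "\<forall>q\<in>Q. 0 \<le> w'' q"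
      "sum w'' Q = 1" "\<forall>a. (\<Sum>q\<in>Q. w'' q * q a) = (\<Sum>p\<in>P - {p0}. w' p * p a)"
      using less.hyps[OF smaller finite supp nonneg sum1] by blast
    show ?thesis by (intro exI[of _ Q] exI[of _ w'']) (use Q same in auto)
  qed
qed

lemma joint_prob_eq_prod:
  fixes i :: "'n::finite"
  shows "joint_prob i b \<sigma> k = (\<Prod>j\<in>UNIV. (if j = i then b else \<sigma> j) (k j))"
proof -
  have "(\<Prod>j\<in>UNIV. (if j = i then b else \<sigma> j) (k j))
        = b (k i) * (\<Prod>j\<in>UNIV - {i}. (if j = i then b else \<sigma> j) (k j))"
    using prod.remove[of UNIV i "\<lambda>j. (if j = i then b else \<sigma> j) (k j)"] by simp
  also have "(\<Prod>j\<in>UNIV - {i}. (if j = i then b else \<sigma> j) (k j)) = (\<Prod>j\<in>UNIV - {i}. \<sigma> j (k j))"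
    by (rule prod.cong) auto
  finally show ?thesis by (simp add: joint_prob_def)
qed

lemma joint_prob_nonneg:
  assumes "b \<in> bb_simplex (A i)" and "\<And>j. \<sigma> j \<in> bb_simplex (A j)"
  shows "0 \<le> joint_prob i b \<sigma> k"
  using assms unfolding joint_prob_def bb_simplex_def by (auto intro!: mult_nonneg_nonneg prod_nonneg)

lemma sum_joint_prob:
  fixes A :: "'n::finite \<Rightarrow> 'a set"
  assumes fin: "\<And>j. finite (A j)" and b: "b \<in> bb_simplex (A i)" and \<sigma>: "\<And>j. \<sigma> j \<in> bb_simplex (A j)"
  shows "(\<Sum>k\<in>PiE UNIV A. joint_prob i b \<sigma> k) = 1"
proof -
  have "(\<Sum>k\<in>PiE UNIV A. joint_prob i b \<sigma> k)
        = (\<Sum>k\<in>PiE UNIV A. \<Prod>j\<in>UNIV. (if j = i then b else \<sigma> j) (k j))"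
    by (simp add: joint_prob_eq_prod)
  also have "\<dots> = (\<Prod>j\<in>UNIV. \<Sum>a\<in>A j. (if j = i then b else \<sigma> j) a)"
    by (rule prod_sum_PiE[symmetric]) (auto simp: fin)
  also have "\<dots> = 1" using b \<sigma> by (intro prod.neutral) (auto simp: bb_simplex_def)
  finally show ?thesis .
qed

lemma lott_prob_joint_prob_bounds:
  fixes A :: "'n::finite \<Rightarrow> 'a set"
  assumes fin: "\<And>j. finite (A j)" and b: "b \<in> bb_simplex (A i)" and \<sigma>: "\<And>j. \<sigma> j \<in> bb_simplex (A j)"
  shows "lott_prob (PiE UNIV A) (joint_prob i b \<sigma>) P \<in> {0..1}"
proof -
  have nonneg: "0 \<le> joint_prob i b \<sigma> k" for k using b \<sigma> by (rule joint_prob_nonneg)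
  have "finite (PiE UNIV A)" using fin by (intro finite_PiE) auto
  then have "lott_prob (PiE UNIV A) (joint_prob i b \<sigma>) P \<le> (\<Sum>k\<in>PiE UNIV A. joint_prob i b \<sigma> k)"
    unfolding lott_prob_def by (intro sum_mono2) (auto simp: nonneg)
  also have "\<dots> = 1" using fin b \<sigma> by (rule sum_joint_prob)
  finally show ?thesis using nonneg by (auto simp: lott_prob_def intro: sum_nonneg)
qed

text \<open>The outcomes of the lottery do not move, only the probabilities do; so only the continuity
  of the weighting functions on \<open>[0, 1]\<close> matters.\<close>

lemma continuous_on_bb_value:
  fixes A :: "'n::finite \<Rightarrow> 'a set"
    and \<sigma> :: "'y::topological_space \<Rightarrow> 'n \<Rightarrow> 'a \<Rightarrow> real" and b :: "'y \<Rightarrow> 'a \<Rightarrow> real"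
  assumes fin: "\<And>j. finite (A j)" and prefs: "cpt_prefs (r i) (v i) (wp i) (wm i)"
    and cont_\<sigma>: "continuous_on Y \<sigma>" and cont_b: "continuous_on Y b"
    and \<sigma>_in: "\<And>y j. y \<in> Y \<Longrightarrow> \<sigma> y j \<in> bb_simplex (A j)"
    and b_in: "\<And>y. y \<in> Y \<Longrightarrow> b y \<in> bb_simplex (A i)"
  shows "continuous_on Y (\<lambda>y. bb_value A x r v wp wm i (\<sigma> y) (b y))"
proof -
  have "continuous_on Y (\<lambda>y. joint_prob i (b y) (\<sigma> y) k)" for k
    unfolding joint_prob_def
    by (intro continuous_intros continuous_on_product_then_coordinatewise[OF cont_b]
        continuous_on_product_then_coordinatewise[OF continuous_on_product_then_coordinatewise[OF cont_\<sigma>]])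
  then have prob: "continuous_on Y (\<lambda>y. lott_prob (PiE UNIV A) (joint_prob i (b y) (\<sigma> y)) P)" for P
    unfolding lott_prob_def by (intro continuous_intros)
  have bounds: "y \<in> Y \<Longrightarrow> lott_prob (PiE UNIV A) (joint_prob i (b y) (\<sigma> y)) P \<in> {0..1}" for y P
    using fin b_in \<sigma>_in by (rule lott_prob_joint_prob_bounds)
  have "continuous_on {0..1} (wp i)" "continuous_on {0..1} (wm i)"
    using prefs by (auto simp: cpt_prefs_def)
  then have "continuous_on Y (\<lambda>y. wp i (lott_prob (PiE UNIV A) (joint_prob i (b y) (\<sigma> y)) P))"
    "continuous_on Y (\<lambda>y. wm i (lott_prob (PiE UNIV A) (joint_prob i (b y) (\<sigma> y)) P))" for P
    using bounds by (auto intro!: continuous_on_compose2[OF _ prob])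
  then show ?thesis
    unfolding bb_value_def cpt_value_def by (intro continuous_intros)
qed

lemma closed_sum_eq: "closed {b :: 'a \<Rightarrow> real. sum b S = c}"
proof -
  have "continuous_on UNIV (\<lambda>b :: 'a \<Rightarrow> real. \<Sum>a\<in>S. b a)"
    by (intro continuous_on_sum continuous_on_product_coordinates)
  then show ?thesis using closed_Collect_eq[of "\<lambda>b. \<Sum>a\<in>S. b a" "\<lambda>_. c"] by auto
qed

lemma closed_bb_simplex: "closed (bb_simplex S)"
proof -
  have "bb_simplex S = {b. \<forall>a. b a \<in> (if a \<in> S then {0..} else {0})} \<inter> {b. sum b S = 1}"
    by (auto simp: bb_simplex_def split: if_splits; metis order.refl)
  also have "closed \<dots>" by (intro closed_Int closed_fun_box closed_sum_eq) auto
  finally show ?thesis .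
qed

lemma compact_bb_simplex:
  assumes "finite S"
  shows "compact (bb_simplex S)"
proof -
  have "b a \<le> 1" if "b \<in> bb_simplex S" for b a using that assms by (rule bb_simplex_le_one)
  then have "bb_simplex S = {b. \<forall>a. b a \<in> (if a \<in> S then {0..1} else {0})} \<inter> {b. sum b S = 1}"
    by (auto simp: bb_simplex_def split: if_splits; metis order.refl)
  also have "compact \<dots>" by (intro compact_Int_closed compact_fun_box closed_sum_eq) auto
  finally show ?thesis .
qed

lemma convex_combination_in_bb_simplex:
  assumes p: "\<And>k. k \<in> J \<Longrightarrow> p k \<in> bb_simplex A" and w: "w \<in> bb_simplex J"
  shows "(\<lambda>a. \<Sum>k\<in>J. w k * p k a) \<in> bb_simplex A"
proof -
  have "(\<Sum>a\<in>A. \<Sum>k\<in>J. w k * p k a) = (\<Sum>k\<in>J. w k * (\<Sum>a\<in>A. p k a))"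
    by (simp add: sum.swap[of _ A] sum_distrib_left)
  also have "\<dots> = (\<Sum>k\<in>J. w k)" using p by (intro sum.cong) (auto simp: bb_simplex_def)
  also have "\<dots> = 1" using w by (simp add: bb_simplex_def)
  finally show ?thesis using p w
    by (auto simp: bb_simplex_def intro!: sum_nonneg mult_nonneg_nonneg sum.neutral)
qed

lemma embed_pmf_bb_simplex:
  fixes w :: "'b \<Rightarrow> real"
  assumes w: "w \<in> bb_simplex S" and S: "finite S"
  shows "set_pmf (embed_pmf w) = {k. w k \<noteq> 0}"
    and "measure_pmf.expectation (embed_pmf w) f = (\<Sum>k\<in>S. w k * f k)"
proof -
  have nonneg: "\<And>k. 0 \<le> w k" using w by (simp add: bb_simplex_def)
  have "(\<integral>\<^sup>+k. ennreal (w k) \<partial>count_space UNIV) = (\<Sum>k\<in>S. ennreal (w k))"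
    using w S by (intro nn_integral_count_space') (auto simp: bb_simplex_def)
  also have "\<dots> = 1" using w nonneg by (simp add: sum_ennreal bb_simplex_def)
  finally have total: "(\<integral>\<^sup>+k. ennreal (w k) \<partial>count_space UNIV) = 1" .
  show set: "set_pmf (embed_pmf w) = {k. w k \<noteq> 0}"
    using set_embed_pmf[OF nonneg total] .
  have "measure_pmf.expectation (embed_pmf w) f = (\<Sum>k\<in>S. pmf (embed_pmf w) k *\<^sub>R f k)"
    using w S by (intro integral_measure_pmf) (auto simp: set bb_simplex_def)
  then show "measure_pmf.expectation (embed_pmf w) f = (\<Sum>k\<in>S. w k * f k)"
    by (simp add: pmf_embed_pmf[OF nonneg total])
qed

definition mixture :: "nat \<Rightarrow> ('n \<Rightarrow> nat \<Rightarrow> real) \<Rightarrow> ('n \<Rightarrow> nat \<Rightarrow> 'a \<Rightarrow> real) \<Rightarrow> 'n \<Rightarrow> 'a \<Rightarrow> real"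
  where "mixture K l \<beta> j a = (\<Sum>k<K. l j k * \<beta> j k a)"

definition slot_profiles ::
  "nat \<Rightarrow> ('n \<Rightarrow> 'a set) \<Rightarrow> (('n \<Rightarrow> nat \<Rightarrow> 'a \<Rightarrow> real) \<times> ('n \<Rightarrow> nat \<Rightarrow> real)) set" where
  "slot_profiles K A = {\<beta>. \<forall>i k. \<beta> i k \<in> bb_simplex (A i)} \<times> simplex_profiles (\<lambda>_. {..<K})"

text \<open>Weighting by \<open>l i k\<close> makes the condition closed: every slot in use is at least as good
  as \<open>b'\<close>.\<close>

definition passes_test ::
  "('n::finite \<Rightarrow> 'a set) \<Rightarrow> ('n \<Rightarrow> ('n \<Rightarrow> 'a) \<Rightarrow> real) \<Rightarrow> ('n \<Rightarrow> real) \<Rightarrow> ('n \<Rightarrow> real \<Rightarrow> real)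
    \<Rightarrow> ('n \<Rightarrow> real \<Rightarrow> real) \<Rightarrow> ('n \<Rightarrow> real \<Rightarrow> real) \<Rightarrow> nat \<Rightarrow> 'n \<Rightarrow> ('a \<Rightarrow> real)
    \<Rightarrow> (('n \<Rightarrow> nat \<Rightarrow> 'a \<Rightarrow> real) \<times> ('n \<Rightarrow> nat \<Rightarrow> real)) set" where
  "passes_test A x r v wp wm K i b' = {(\<beta>, l). \<forall>k.
     l i k * (bb_value A x r v wp wm i (mixture K l \<beta>) b'
              - bb_value A x r v wp wm i (mixture K l \<beta>) (\<beta> i k)) \<le> 0}"

lemma mixture_in_bb_simplex:
  assumes "l \<in> simplex_profiles (\<lambda>_. {..<K})" and "\<And>k. \<beta> j k \<in> bb_simplex (A j)"
  shows "mixture K l \<beta> j \<in> bb_simplex (A j)"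
  unfolding mixture_def fun_eq_iff
  by (rule convex_combination_in_bb_simplex) (use assms in \<open>auto simp: simplex_profiles_def\<close>)

text \<open>By Caratheodory's theorem, a mixture of points of \<open>\<Delta>(A)\<close> is a mixture of at most \<open>card A + 1\<close>
  of them, which can be listed in \<open>K\<close> slots (repeating a point with weight zero if needed).\<close>

lemma mixture_in_slots:
  fixes P :: "('a \<Rightarrow> real) set"
  assumes A: "finite A" and P: "finite P" and sub: "P \<subseteq> bb_simplex A" and w: "w \<in> bb_simplex P"
    and K: "card A + 1 \<le> K"
  obtains \<beta> :: "nat \<Rightarrow> 'a \<Rightarrow> real" and l where "\<And>k. \<beta> k \<in> P" and "\<And>k. w (\<beta> k) > 0"
    and "l \<in> bb_simplex {..<K}" and "\<And>a. (\<Sum>k<K. l k * \<beta> k a) = (\<Sum>p\<in>P. w p * p a)"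
proof -
  define Pos where "Pos = {p\<in>P. w p > 0}"
  have w_nonneg: "0 \<le> w p" for p using w by (simp add: bb_simplex_def)
  have Pos_sum: "(\<Sum>p\<in>Pos. w p * f p) = (\<Sum>p\<in>P. w p * f p)" for f :: "('a \<Rightarrow> real) \<Rightarrow> real"
    using P w_nonneg by (intro sum.mono_neutral_left) (auto simp: Pos_def order_le_less)
  have Pos: "finite Pos" "\<And>p. p \<in> Pos \<Longrightarrow> {a. p a \<noteq> 0} \<subseteq> A"
    "\<And>p. p \<in> Pos \<Longrightarrow> 0 \<le> w p" "sum w Pos = 1"
    using P sub w w_nonneg Pos_sum[of "\<lambda>_. 1"] by (auto simp: Pos_def bb_simplex_def)
  obtain Q w' where Q: "Q \<subseteq> Pos" "card Q \<le> card A + 1" "\<forall>q\<in>Q. 0 \<le> w' q" "sum w' Q = 1"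
    and same: "\<forall>a. (\<Sum>q\<in>Q. w' q * q a) = (\<Sum>p\<in>Pos. w p * p a)"
    using caratheodory_finite_support[OF A Pos] by blast
  have "finite Q" using Q(1) Pos(1) by (rule finite_subset)
  then obtain e where e: "bij_betw e {..<card Q} Q"
    using ex_bij_betw_nat_finite by (force simp: atLeast0LessThan)
  have "Q \<noteq> {}" using Q(4) by auto
  then have "0 < card Q" using \<open>finite Q\<close> by auto
  define \<beta> where "\<beta> k = e (if k < card Q then k else 0)" for k
  define l where "l k = (if k < card Q then w' (e k) else 0)" for k
  have e_Q: "k < card Q \<Longrightarrow> e k \<in> Q" for k using e by (auto simp: bij_betw_def)
  have \<beta>_Q: "\<beta> k \<in> Q" for k using e_Q \<open>0 < card Q\<close> by (simp add: \<beta>_def)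
  have slots: "(\<Sum>k<K. l k * f (\<beta> k)) = (\<Sum>q\<in>Q. w' q * f q)" for f :: "('a \<Rightarrow> real) \<Rightarrow> real"
  proof -
    have "(\<Sum>k<K. l k * f (\<beta> k)) = (\<Sum>k<card Q. l k * f (\<beta> k))"
      using Q(2) K by (intro sum.mono_neutral_right) (auto simp: l_def)
    also have "\<dots> = (\<Sum>k<card Q. w' (e k) * f (e k))" by (rule sum.cong) (auto simp: l_def \<beta>_def)
    also have "\<dots> = (\<Sum>q\<in>Q. w' q * f q)" by (rule sum.reindex_bij_betw[OF e])
    finally show ?thesis .
  qed
  show ?thesis
  proof
    show "\<beta> k \<in> P" "w (\<beta> k) > 0" for k using \<beta>_Q Q(1) by (auto simp: Pos_def)
    show "(\<Sum>k<K. l k * \<beta> k a) = (\<Sum>p\<in>P. w p * p a)" for a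
      using slots[of "\<lambda>q. q a"] same Pos_sum[of "\<lambda>p. p a"] by simp
    have "sum l {..<K} = 1" using slots[of "\<lambda>_. 1"] Q(4) by simp
    moreover have "0 \<le> l k" for k using Q(3) e_Q by (simp add: l_def)
    moreover have "l k = 0" if "k \<notin> {..<K}" for k using that Q(2) K by (simp add: l_def)
    ultimately show "l \<in> bb_simplex {..<K}" by (simp add: bb_simplex_def)
  qed
qed

text \<open>Against finitely many test strategies \<open>T i\<close>, Nash's theorem for the finite game with
  strategy sets \<open>T i\<close> (the payoffs are continuous but not multilinear) gives an equilibrium,
  whose mixtures are then compressed into \<open>K\<close> slots.\<close>

lemma finite_tests_equilibrium:
  fixes A :: "'n::finite \<Rightarrow> 'a set" and T :: "'n \<Rightarrow> ('a \<Rightarrow> real) set"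
  assumes fin: "\<And>i. finite (A i)" and prefs: "\<And>i. cpt_prefs (r i) (v i) (wp i) (wm i)"
    and T: "\<And>i. finite (T i)" "\<And>i. T i \<noteq> {}" "\<And>i. T i \<subseteq> bb_simplex (A i)"
    and K: "\<And>i. card (A i) + 1 \<le> K"
  obtains \<beta> l where "(\<beta>, l) \<in> slot_profiles K A"
    and "\<And>i b'. b' \<in> T i \<Longrightarrow> (\<beta>, l) \<in> passes_test A x r v wp wm K i b'"
proof -
  define mix where "mix \<theta> j = (\<lambda>a. \<Sum>g\<in>T j. \<theta> j g * g a)" for \<theta> :: "'n \<Rightarrow> ('a \<Rightarrow> real) \<Rightarrow> real" and j
  define u where "u i \<theta> g = bb_value A x r v wp wm i (mix \<theta>) g" for i \<theta> g
  have mix_in: "mix \<theta> j \<in> bb_simplex (A j)" if "\<theta> \<in> simplex_profiles T" for \<theta> j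
    unfolding mix_def
    by (rule convex_combination_in_bb_simplex) (use T(3) that in \<open>auto simp: simplex_profiles_def\<close>)
  have cont_mix: "continuous_on UNIV mix"
    unfolding mix_def
    by (intro continuous_on_coordinatewise_then_product continuous_intros continuous_on_component2)
  have "continuous_on (simplex_profiles T) (\<lambda>\<theta>. u i \<theta> g)" if "g \<in> T i" for i g
    unfolding u_def
    by (rule continuous_on_bb_value[where r = r and v = v and wp = wp and wm = wm and i = i,
          OF fin prefs continuous_on_subset[OF cont_mix subset_UNIV] continuous_on_const])
      (use that T(3) mix_in in auto)
  then obtain \<theta> where \<theta>: "\<theta> \<in> simplex_profiles T"
    and best: "\<And>i g h. g \<in> T i \<Longrightarrow> \<theta> i g > 0 \<Longrightarrow> h \<in> T i \<Longrightarrow> u i \<theta> h \<le> u i \<theta> g"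
    using finite_game_support_best_reply[where T = T and u = u, OF T(1,2)] by blast
  have "\<exists>\<beta>' l'. (\<forall>k. \<beta>' k \<in> T i \<and> \<theta> i (\<beta>' k) > 0) \<and> l' \<in> bb_simplex {..<K} \<and>
          (\<forall>a. (\<Sum>k<K. l' k * \<beta>' k a) = mix \<theta> i a)" for i
  proof -
    have "\<theta> i \<in> bb_simplex (T i)" using \<theta> by (simp add: simplex_profiles_def)
    then obtain \<beta>' l' where "\<And>k. \<beta>' k \<in> T i" "\<And>k. \<theta> i (\<beta>' k) > 0" "l' \<in> bb_simplex {..<K}"
      "\<And>a. (\<Sum>k<K. l' k * \<beta>' k a) = (\<Sum>p\<in>T i. \<theta> i p * p a)"
      using mixture_in_slots[OF fin[of i] T(1)[of i] T(3)[of i] _ K[of i]] by blast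
    then show ?thesis unfolding mix_def by blast
  qed
  then obtain \<beta> l where \<beta>: "\<And>i k. \<beta> i k \<in> T i" "\<And>i k. \<theta> i (\<beta> i k) > 0"
    and l: "\<And>i. l i \<in> bb_simplex {..<K}" and same: "\<And>i a. (\<Sum>k<K. l i k * \<beta> i k a) = mix \<theta> i a"
    by metis
  have "mixture K l \<beta> = mix \<theta>" by (intro ext) (simp add: mixture_def same)
  show ?thesis
  proof
    show "(\<beta>, l) \<in> slot_profiles K A"
      using \<beta>(1) T(3) l by (auto simp: slot_profiles_def simplex_profiles_def)
    fix i b' assume "b' \<in> T i"
    then have "u i \<theta> b' \<le> u i \<theta> (\<beta> i k)" for k using best \<beta> by blast
    moreover have "0 \<le> l i k" for k using l by (simp add: bb_simplex_def)
    ultimately show "(\<beta>, l) \<in> passes_test A x r v wp wm K i b'"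
      by (simp add: passes_test_def \<open>mixture K l \<beta> = mix \<theta>\<close> u_def mult_nonneg_nonpos)
  qed
qed

lemma compact_slot_profiles:
  fixes A :: "'n \<Rightarrow> 'a set" and K :: nat
  assumes "\<And>i. finite (A i)"
  shows "compact (slot_profiles K A)" and "closed (slot_profiles K A)"
proof -
  have "compact {g :: nat \<Rightarrow> 'a \<Rightarrow> real. \<forall>k. g k \<in> bb_simplex (A i)}" for i
    by (rule compact_fun_box) (rule compact_bb_simplex[OF assms])
  then have "compact {\<beta> :: 'n \<Rightarrow> nat \<Rightarrow> 'a \<Rightarrow> real. \<forall>i. \<beta> i \<in> {g. \<forall>k. g k \<in> bb_simplex (A i)}}"
    by (rule compact_fun_box)
  moreover have "compact (simplex_profiles (\<lambda>_ :: 'n. {..<K}))"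
    unfolding simplex_profiles_def by (rule compact_fun_box) (simp add: compact_bb_simplex)
  ultimately show "compact (slot_profiles K A)" by (auto simp: slot_profiles_def intro!: compact_Times)
  have "closed {\<beta> :: 'n \<Rightarrow> nat \<Rightarrow> 'a \<Rightarrow> real. \<forall>i. \<beta> i \<in> {g. \<forall>k. g k \<in> bb_simplex (A i)}}"
    by (intro closed_fun_box closed_bb_simplex)
  moreover have "closed (simplex_profiles (\<lambda>_ :: 'n. {..<K}))"
    unfolding simplex_profiles_def by (intro closed_fun_box closed_bb_simplex)
  ultimately show "closed (slot_profiles K A)" by (auto simp: slot_profiles_def intro!: closed_Times)
qed

lemma continuous_on_mixture:
  "continuous_on S (\<lambda>y :: ('n \<Rightarrow> nat \<Rightarrow> 'a \<Rightarrow> real) \<times> ('n \<Rightarrow> nat \<Rightarrow> real). mixture K (snd y) (fst y))"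
proof -
  have "continuous_on S (\<lambda>y :: ('n \<Rightarrow> nat \<Rightarrow> 'a \<Rightarrow> real) \<times> ('n \<Rightarrow> nat \<Rightarrow> real). fst y j k a)" for j k a
    by (rule continuous_on_product_then_coordinatewise,
        rule continuous_on_compose2[OF continuous_on_component2 continuous_on_fst[OF continuous_on_id]]) auto
  moreover have "continuous_on S (\<lambda>y :: ('n \<Rightarrow> nat \<Rightarrow> 'a \<Rightarrow> real) \<times> ('n \<Rightarrow> nat \<Rightarrow> real). snd y j k)" for j k
    by (rule continuous_on_compose2[OF continuous_on_component2 continuous_on_snd[OF continuous_on_id]]) auto
  ultimately show ?thesis
    unfolding mixture_def
    by (intro continuous_on_coordinatewise_then_product continuous_intros) auto
qed

lemma closed_passes_test:
  fixes A :: "'n::finite \<Rightarrow> 'a set"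
  assumes fin: "\<And>j. finite (A j)" and prefs: "cpt_prefs (r i) (v i) (wp i) (wm i)"
    and b': "b' \<in> bb_simplex (A i)"
  shows "closed (slot_profiles K A \<inter> passes_test A x r v wp wm K i b')"
proof -
  define X where "X = slot_profiles K A"
  define V where "V y b = bb_value A x r v wp wm i (mixture K (snd y) (fst y)) b" for y b
  have X: "closed X" unfolding X_def by (rule compact_slot_profiles(2)[OF fin])
  have fst_in: "fst y i k \<in> bb_simplex (A i)" if "y \<in> X" for y k
    using that by (auto simp: X_def slot_profiles_def)
  have mixture_in: "mixture K (snd y) (fst y) j \<in> bb_simplex (A j)" if "y \<in> X" for y j
    using that by (intro mixture_in_bb_simplex) (auto simp: X_def slot_profiles_def)
  have cont_fst: "continuous_on X (\<lambda>y. fst y i k)" for k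
    by (rule continuous_on_compose2[OF continuous_on_component2 continuous_on_fst[OF continuous_on_id]])
      auto
  have "continuous_on X (\<lambda>y. V y b')" "continuous_on X (\<lambda>y. V y (fst y i k))" for k
    unfolding V_def
    using continuous_on_bb_value[where A = A and r = r and v = v and wp = wp and wm = wm and i = i,
        OF fin prefs continuous_on_mixture _ mixture_in] b' fst_in cont_fst
    by auto
  moreover have "continuous_on X (\<lambda>y. snd y i k)" for k
    by (rule continuous_on_compose2[OF continuous_on_component2 continuous_on_snd[OF continuous_on_id]])
      auto
  ultimately have "closed (\<Inter>k. X \<inter> (\<lambda>y. snd y i k * (V y b' - V y (fst y i k))) -` {..0})"
    by (intro closed_INT ballI continuous_closed_preimage[OF _ X closed_atMost] continuous_intros)
  also have "(\<Inter>k. X \<inter> (\<lambda>y. snd y i k * (V y b' - V y (fst y i k))) -` {..0})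
             = X \<inter> passes_test A x r v wp wm K i b'"
    by (auto simp: passes_test_def V_def)
  finally show ?thesis unfolding X_def .
qed

text \<open>Any finitely many of the closed sets \<open>passes_test \<dots> i b'\<close> meet in the compact space of
  slot profiles, so all of them do.\<close>

lemma bounded_support_equilibrium:
  fixes A :: "'n::finite \<Rightarrow> 'a set"
  assumes fin: "\<And>i. finite (A i)" and nonempty: "\<And>i. A i \<noteq> {}"
    and prefs: "\<And>i. cpt_prefs (r i) (v i) (wp i) (wm i)" and K: "\<And>i. card (A i) + 1 \<le> K"
  obtains \<beta> l where "\<And>i k. \<beta> i k \<in> bb_simplex (A i)" and "l \<in> simplex_profiles (\<lambda>_. {..<K})"
    and "\<And>i k. l i k \<noteq> 0 \<Longrightarrow> bb_best_response A x r v wp wm i (mixture K l \<beta>) (\<beta> i k)"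
proof -
  define tests where "tests = (\<lambda>(i, b'). slot_profiles K A \<inter> passes_test A x r v wp wm K i b')
                                ` (SIGMA i:UNIV. bb_simplex (A i))"
  have "slot_profiles K A \<inter> \<Inter> tests \<noteq> {}"
  proof (rule compact_imp_fip[OF compact_slot_profiles(1)[where A = A, OF fin]])
    fix S assume "S \<in> tests"
    then obtain i b' where b': "b' \<in> bb_simplex (A i)"
      and S: "S = slot_profiles K A \<inter> passes_test A x r v wp wm K i b'"
      by (auto simp: tests_def)
    show "closed S" unfolding S
      by (rule closed_passes_test[where A = A and r = r and v = v and wp = wp and wm = wm, OF fin prefs b'])
  next
    fix F assume "finite F" "F \<subseteq> tests"
    then obtain Z where Z: "Z \<subseteq> (SIGMA i:UNIV. bb_simplex (A i))" "finite Z"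
      and F: "F = (\<lambda>(i, b'). slot_profiles K A \<inter> passes_test A x r v wp wm K i b') ` Z"
      unfolding tests_def by (meson finite_subset_image)
    define a0 where "a0 i = (SOME a. a \<in> A i)" for i
    define T where "T i = insert (indicator {a0 i}) {b'. (i, b') \<in> Z}" for i
    have "{b'. (i, b') \<in> Z} \<subseteq> snd ` Z" for i by force
    then have T_fin: "finite (T i)" for i using Z(2) by (auto simp: T_def intro: finite_subset)
    have "a0 i \<in> A i" for i using nonempty[of i] by (simp add: a0_def some_in_eq)
    then have T_sub: "T i \<subseteq> bb_simplex (A i)" for i
      using Z(1) fin[of i] by (auto simp: T_def bb_simplex_def indicator_def)
    obtain \<beta> l where "(\<beta>, l) \<in> slot_profiles K A"
      and "\<And>i b'. b' \<in> T i \<Longrightarrow> (\<beta>, l) \<in> passes_test A x r v wp wm K i b'"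
      using finite_tests_equilibrium[where A = A and T = T and r = r and v = v and wp = wp and wm = wm
          and x = x, OF fin prefs T_fin _ T_sub K] by (auto simp: T_def)
    then have "(\<beta>, l) \<in> slot_profiles K A \<inter> \<Inter> F" by (auto simp: F T_def)
    then show "slot_profiles K A \<inter> \<Inter> F \<noteq> {}" by blast
  qed
  then obtain \<beta> l where "(\<beta>, l) \<in> slot_profiles K A \<inter> \<Inter> tests"
    by (metis ex_in_conv surj_pair)
  then have slots: "(\<beta>, l) \<in> slot_profiles K A"
    and passes: "\<And>i b'. b' \<in> bb_simplex (A i) \<Longrightarrow> (\<beta>, l) \<in> passes_test A x r v wp wm K i b'"
    by (auto simp: tests_def)
  show ?thesis
  proof
    show "\<beta> i k \<in> bb_simplex (A i)" for i k using slots by (simp add: slot_profiles_def)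
    show "l \<in> simplex_profiles (\<lambda>_. {..<K})" using slots by (simp add: slot_profiles_def)
    fix i k assume "l i k \<noteq> 0"
    then have "l i k > 0" using slots
      by (auto simp: slot_profiles_def simplex_profiles_def bb_simplex_def order_le_less)
    then have "bb_value A x r v wp wm i (mixture K l \<beta>) b' \<le> bb_value A x r v wp wm i (mixture K l \<beta>) (\<beta> i k)"
      if "b' \<in> bb_simplex (A i)" for b'
      using passes[OF that] by (auto simp: passes_test_def mult_le_0_iff)
    then show "bb_best_response A x r v wp wm i (mixture K l \<beta>) (\<beta> i k)"
      using slots by (auto simp: bb_best_response_def slot_profiles_def)
  qed
qed

theorem corollary1:
  fixes A :: "'n::finite \<Rightarrow> 'a set"
    and x :: "'n \<Rightarrow> ('n \<Rightarrow> 'a) \<Rightarrow> real"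
    and r :: "'n \<Rightarrow> real"
    and v wp wm :: "'n \<Rightarrow> real \<Rightarrow> real"
  assumes "\<And>i. finite (A i)" and "\<And>i. A i \<noteq> {}"
    and "\<And>i. cpt_prefs (r i) (v i) (wp i) (wm i)"
  shows "\<exists>\<tau> :: 'n \<Rightarrow> ('a \<Rightarrow> real) pmf.
           (\<forall>i. finite (set_pmf (\<tau> i))) \<and> mixed_bb_nash A x r v wp wm \<tau>"
proof -
  define K where "K = (\<Sum>i\<in>UNIV. card (A i)) + 1"
  have K: "card (A i) + 1 \<le> K" for i using member_le_sum[of i UNIV "\<lambda>i. card (A i)"] by (simp add: K_def)
  obtain \<beta> l where \<beta>: "\<And>i k. \<beta> i k \<in> bb_simplex (A i)" and l: "l \<in> simplex_profiles (\<lambda>_. {..<K})"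
    and best: "\<And>i k. l i k \<noteq> 0 \<Longrightarrow> bb_best_response A x r v wp wm i (mixture K l \<beta>) (\<beta> i k)"
    using bounded_support_equilibrium[where A = A and r = r and v = v and wp = wp and wm = wm and x = x
        and K = K, OF assms K] by blast
  define \<tau> where "\<tau> i = map_pmf (\<beta> i) (embed_pmf (l i))" for i
  have l_i: "l i \<in> bb_simplex {..<K}" for i using l by (simp add: simplex_profiles_def)
  have set_\<tau>: "set_pmf (\<tau> i) = \<beta> i ` {k. l i k \<noteq> 0}" for i
    using embed_pmf_bb_simplex(1)[OF l_i] by (simp add: \<tau>_def)
  have "induced_mixed (\<tau> j) a = mixture K l \<beta> j a" for j a
    using embed_pmf_bb_simplex(2)[OF l_i finite_lessThan] by (simp add: induced_mixed_def \<tau>_def mixture_def)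
  then have "(\<lambda>j. induced_mixed (\<tau> j)) = mixture K l \<beta>" by (intro ext)
  moreover have "{k. l i k \<noteq> 0} \<subseteq> {..<K}" for i using l_i by (auto simp: bb_simplex_def)
  ultimately show ?thesis
    using \<beta> best by (intro exI[of _ \<tau>]) (auto simp: mixed_bb_nash_def set_\<tau> intro: finite_subset)
qed

end
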